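(* Let $\Gamma$, $\varepsilon$, $q$, $E$, $\{e_i:i\in I\}$, $p$, $\pi$ and $R$ be as follows: $\varepsilon$ is a commutation factor on the abelian group $\Gamma$ which can be written as $\varepsilon(\alpha,\beta)=(-1)^{\pi(\alpha)\pi(\beta)}\sigma(\alpha,\beta)/\sigma(\beta,\alpha)$ for some map $\sigma:\Gamma\times\Gamma\to\mathbb{C}\setminus\{0\}$; $E$ is a finite-dimensional $\Gamma$-graded complex vector space with homogeneous basis $\{e_i\}_{i\in I}$, $I$ totally ordered, $\deg e_i=p(i)$; and $R$ is the color Hecke $R$-matrix $$R(e_i\otimes e_j)=\begin{cases} q^{1-2\pi(p(i))}\varepsilon(p(i),p(i))\, e_i\otimes e_i, & i=j,\\ (q-q^{-1})e_i\otimes e_j+\varepsilon(p(i),p(j))\,e_j\otimes e_i, & i<j,\\ \varepsilon(p(i),p(j))\,e_j\otimes e_i,& i>j.\end{cases}$$ Let $\bar R$ be the super (i.e. $\mathbb{Z}_2$-graded) Hecke $R$-matrix on the same space with the $\mathbb{Z}_2$-grading $\delta=\pi\circ p$: $$\bar R(e_i\otimes e_j)=\begin{cases} (-1)^{\delta(i)}q^{1-2\delta(i)}\, e_i\otimes e_i, & i=j,\\ (q-q^{-1})e_i\otimes e_j+(-1)^{\delta(i)\delta(j)}e_j\otimes e_i, & i<j,\\ (-1)^{\delta(i)\delta(j)}e_j\otimes e_i,& i>j,\end{cases}$$ and let $F:E\otimes E\to E\otimes E$ be the invertible diagonal map $F(e_i\otimes e_j)=\sigma(p(i),p(j))\,e_i\otimes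 e_j$. Then $R=F^{-1}\circ\bar R\circ F$; that is, the color Hecke $R$-matrix is obtained from the $\mathbb{Z}_2$-graded Hecke $R$-matrix by the twist determined by $\sigma$ (equivalently, by tensoring with the color exchange operator $\rho_\alpha\otimes\rho_\beta\mapsto \frac{\sigma(\alpha,\beta)}{\sigma(\beta,\alpha)}\rho_\beta\otimes\rho_\alpha$ on the degree-tracking factors).
   Context: A commutation factor on $\Gamma$ is a map $\varepsilon:\Gamma\times\Gamma\to\mathbb{C}\setminus\{0\}$ with $\varepsilon(\alpha,\beta)\varepsilon(\beta,\alpha)=1$ and $\varepsilon(\alpha+\beta,\gamma)=\varepsilon(\alpha,\gamma)\varepsilon(\beta,\gamma)$. $\pi:\Gamma\to\{0,1\}$ is defined by $\pi(\alpha)=0$ if $\varepsilon(\alpha,\alpha)=1$ and $\pi(\alpha)=1$ if $\varepsilon(\alpha,\alpha)=-1$; $\Gamma_0=\pi^{-1}(0)$ is a subgroup of index at most 2 and $\pi$ is the quotient map $\Gamma\to\Gamma/\Gamma_0\subseteq\mathbb{Z}_2$. $q\in\mathbb{C}\setminus\{0\}$. *)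

theory Defs
  imports Complex_Main
begin

definition commutation_factor :: "('g::ab_group_add \<Rightarrow> 'g \<Rightarrow> complex) \<Rightarrow> bool" where
  "commutation_factor \<epsilon> \<longleftrightarrow>
     (\<forall>a b. \<epsilon> a b \<noteq> 0) \<and>
     (\<forall>a b. \<epsilon> a b * \<epsilon> b a = 1) \<and>
     (\<forall>a b c. \<epsilon> (a + b) c = \<epsilon> a c * \<epsilon> b c)"

definition par :: "('g \<Rightarrow> 'g \<Rightarrow> complex) \<Rightarrow> 'g \<Rightarrow> nat" where
  "par \<epsilon> a = (if \<epsilon> a a = 1 then 0 else 1)"

text \<open>Linear operators on E (x) E, with E having basis e_i indexed by a finite
  linearly ordered type 'i, are represented by their matrices:
  T (i,j) is the coefficient vector of T(e_i (x) e_j) in the basis e_k (x) e_l.\<close>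
type_synonym 'i op2 = "'i \<times> 'i \<Rightarrow> 'i \<times> 'i \<Rightarrow> complex"

text \<open>Composition: (comp2 A B) = A after B.\<close>
definition comp2 :: "('i::finite) op2 \<Rightarrow> 'i op2 \<Rightarrow> 'i op2" where
  "comp2 A B x = (\<lambda>z. \<Sum>y\<in>UNIV. B x y * A y z)"

definition colorR :: "complex \<Rightarrow> ('g::ab_group_add \<Rightarrow> 'g \<Rightarrow> complex) \<Rightarrow> ('i::linorder \<Rightarrow> 'g) \<Rightarrow> 'i op2" where
  "colorR q \<epsilon> p = (\<lambda>(i,j) z.
     if i = j then (if z = (i,i) then q powi (1 - 2 * int (par \<epsilon> (p i))) * \<epsilon> (p i) (p i) else 0)
     else if i < j then (if z = (i,j) then q - inverse q else 0)
                       + (if z = (j,i) then \<epsilon> (p i) (p j) else 0)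
     else (if z = (j,i) then \<epsilon> (p i) (p j) else 0))"

definition superR :: "complex \<Rightarrow> ('i::linorder \<Rightarrow> nat) \<Rightarrow> 'i op2" where
  "superR q \<delta> = (\<lambda>(i,j) z.
     if i = j then (if z = (i,i) then (-1) ^ \<delta> i * q powi (1 - 2 * int (\<delta> i)) else 0)
     else if i < j then (if z = (i,j) then q - inverse q else 0)
                       + (if z = (j,i) then (-1) ^ (\<delta> i * \<delta> j) else 0)
     else (if z = (j,i) then (-1) ^ (\<delta> i * \<delta> j) else 0))"

definition twistF :: "('g \<Rightarrow> 'g \<Rightarrow> complex) \<Rightarrow> ('i \<Rightarrow> 'g) \<Rightarrow> 'i op2" where
  "twistF \<sigma> p = (\<lambda>(i,j) z. if z = (i,j) then \<sigma> (p i) (p j) else 0)"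

definition twistF_inv :: "('g \<Rightarrow> 'g \<Rightarrow> complex) \<Rightarrow> ('i \<Rightarrow> 'g) \<Rightarrow> 'i op2" where
  "twistF_inv \<sigma> p = (\<lambda>(i,j) z. if z = (i,j) then inverse (\<sigma> (p i) (p j)) else 0)"

end

theory Submission
  imports Defs
begin

text \<open>Conjugating by the diagonal twist multiplies the matrix entry from \<open>e\<^sub>i \<otimes> e\<^sub>j\<close> to
  \<open>e\<^sub>k \<otimes> e\<^sub>l\<close> by \<open>\<sigma>(p i, p j) / \<sigma>(p k, p l)\<close>. Both Hecke matrices only have entries at
  \<open>(k,l) = (i,j)\<close>, where this factor is 1, and at \<open>(k,l) = (j,i)\<close>, where it turns the super
  sign \<open>(-1)^(\<delta> i * \<delta> j)\<close> into \<open>\<epsilon>(p i, p j)\<close> by the assumed factorisation of \<open>\<epsilon>\<close>.\<close>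

lemma comp2_twistF_right:
  "comp2 A (twistF \<sigma> p) (i, j) z = \<sigma> (p i) (p j) * A (i, j) z"
proof -
  have "comp2 A (twistF \<sigma> p) (i, j) z
      = (\<Sum>y\<in>UNIV. if y = (i, j) then \<sigma> (p i) (p j) * A y z else 0)"
    unfolding comp2_def by (rule sum.cong) (auto simp: twistF_def)
  then show ?thesis by simp
qed

lemma comp2_twistF_inv_left:
  "comp2 (twistF_inv \<sigma> p) B x (k, l) = B x (k, l) / \<sigma> (p k) (p l)"
proof -
  have "comp2 (twistF_inv \<sigma> p) B x (k, l)
      = (\<Sum>y\<in>UNIV. if y = (k, l) then B x y / \<sigma> (p k) (p l) else 0)"
    unfolding comp2_def by (rule sum.cong) (auto simp: twistF_inv_def divide_inverse split: if_splits)
  then show ?thesis by simp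
qed

lemma comp2_twist_conjugate:
  "comp2 (twistF_inv \<sigma> p) (comp2 A (twistF \<sigma> p)) (i, j) (k, l)
     = \<sigma> (p i) (p j) / \<sigma> (p k) (p l) * A (i, j) (k, l)"
  by (simp add: comp2_twistF_inv_left comp2_twistF_right)

lemma diagonal_of_factorisation:
  assumes "\<sigma> a a \<noteq> 0"
    and "\<epsilon> a a = (-1) ^ (par \<epsilon> a * par \<epsilon> a) * \<sigma> a a / \<sigma> a a"
  shows "\<epsilon> a a = (-1) ^ par \<epsilon> a"
proof -
  have "par \<epsilon> a * par \<epsilon> a = par \<epsilon> a"
    by (simp add: par_def)
  with assms show ?thesis
    by simp
qed

theorem mainTheorem4:
  fixes \<epsilon> \<sigma> :: "'g::ab_group_add \<Rightarrow> 'g \<Rightarrow> complex"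
    and q :: complex
    and p :: "'i::{finite,linorder} \<Rightarrow> 'g"
  assumes "commutation_factor \<epsilon>"
    and "\<forall>a b. \<sigma> a b \<noteq> 0"
    and "\<forall>a b. \<epsilon> a b = (-1) ^ (par \<epsilon> a * par \<epsilon> b) * \<sigma> a b / \<sigma> b a"
    and "q \<noteq> 0"
  shows "colorR q \<epsilon> p = comp2 (twistF_inv \<sigma> p) (comp2 (superR q (\<lambda>i. par \<epsilon> (p i))) (twistF \<sigma> p))"
proof (intro ext)
  fix x z :: "'i \<times> 'i"
  obtain i j k l where x: "x = (i, j)" and z: "z = (k, l)" by fastforce
  have \<sigma>_nonzero: "\<sigma> a b \<noteq> 0" for a b
    using assms(2) by blast
  have \<epsilon>_factor: "\<epsilon> a b = (-1) ^ (par \<epsilon> a * par \<epsilon> b) * \<sigma> a b / \<sigma> b a" for a b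
    using assms(3) by blast
  have \<epsilon>_diagonal: "\<epsilon> a a = (-1) ^ par \<epsilon> a" for a
    by (rule diagonal_of_factorisation[OF \<sigma>_nonzero \<epsilon>_factor])
  have "colorR q \<epsilon> p (i, j) (k, l)
      = \<sigma> (p i) (p j) / \<sigma> (p k) (p l) * superR q (\<lambda>i. par \<epsilon> (p i)) (i, j) (k, l)"
  proof (cases "i = j")
    case True
    then show ?thesis by (simp add: colorR_def superR_def \<epsilon>_diagonal \<sigma>_nonzero)
  next
    case False
    then show ?thesis by (auto simp: colorR_def superR_def \<epsilon>_factor \<sigma>_nonzero)
  qed
  then show "colorR q \<epsilon> p x z
      = comp2 (twistF_inv \<sigma> p) (comp2 (superR q (\<lambda>i. par \<epsilon> (p i))) (twistF \<sigma> p)) x z"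
    unfolding x z comp2_twist_conjugate .
qed

end
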